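(* Let $n>m\ge3$ and let $[x]$, $\mathfrak{h}_{m,n}$, $\varepsilon_j$, the functions $u_{i,j}(\varepsilon)$, the rational functions $S^w_{i,j}$ and the linear action of $W_{m,n}$ on $\mathfrak{h}^*_{m,n}$ be as in the context. Then the meromorphic map $\varphi_{m,n}:\mathfrak{h}_{m,n}\dashrightarrow\mathbb{X}_{m,n}$ with $u$-coordinates $u_{i,j}(\varepsilon)$ is $W_{m,n}$-equivariant with respect to the linear action on $\mathfrak{h}_{m,n}$ and the birational action on $\mathbb{X}_{m,n}$; explicitly, for every $w\in W_{m,n}$ and all $1\le i\le m-1$, $m+2\le j\le n$, $$u_{i,j}(w(\varepsilon))=S^w_{i,j}(u(\varepsilon))$$ as meromorphic functions on $\mathfrak{h}_{m,n}$, where $u_{i,j}(w(\varepsilon))$ denotes the function obtained from $u_{i,j}(\varepsilon)$ by substituting $\varepsilon_k\mapsto w.\varepsilon_k$ for $k=0,\dots,n$. (The same holds for the induced map $L_{m,n}\otimes_{\mathbb{Z}}(\mathbb{C}/\Omega)\dashrightarrow\mathbb{X}_{m,n}$, since the $u_{i,j}(\varepsilon)$ are $\Omega$-periodic in each $\varepsilon_k$.)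
   Context: $[x]$ is a fixed nonzero holomorphic function on $\mathbb{C}$, odd, satisfying the Riemann relation $[x+y][x-y][u+v][u-v]=[x+u][x-u][y+v][y-v]-[x+v][x-v][y+u][y-u]$ for all $x,y,u,v$; $\Omega=\{a:[a]=0\}$ is then a lattice of rank $\le2$ and $[x]$ is quasi-periodic with respect to it. $\mathfrak{h}_{m,n}=\bigoplus_{j=0}^n\mathbb{C}e_j$ with symmetric bilinear form $\langle e_0,e_0\rangle=-(m-2)$, $\langle e_j,e_j\rangle=1$ ($1\le j\le n$), $\langle e_i,e_j\rangle=0$ ($i\ne j$); $\varepsilon_j=\langle e_j,\cdot\rangle\in\mathfrak{h}^*_{m,n}$ serve as coordinates. $h_0=e_0-e_1-\dots-e_m$, $h_k=e_k-e_{k+1}$ ($1\le k\le n-1$), $\alpha_k=\langle h_k,\cdot\rangle$. $W_{m,n}$ is the Coxeter group with generators $s_0,\dots,s_{n-1}$ for the tree $T_{2,m,n-m}$ (chain $1-2-\cdots-(n-1)$, node $0$ attached to node $m$), acting on $\mathfrak{h}^*_{m,n}$ by $s_k.\lambda=\lambda-\langle h_k,\lambda\rangle\alpha_k$. $\mathbb{X}_{m,n}$ is the space of $n$-tuples of points of $\mathbb{P}^{m-1}(\mathbb{C})$ in general position (distinct, no $m$ on a hyperplane) modulo $PGL_m(\mathbb{C})$, identified with a Zariski open subset of $\mathbb{C}^{(m-1)(n-m-1)}$ via the normal form $p_1,\dots,p_m$ = coordinate points, $p_{m+1}=(1:\dots:1)$, $p_j=(u_{1,j}:\dots:u_{m-1,j}:1)$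 ($m+2\le j\le n$). $W_{m,n}$ acts birationally on the right: $s_k$ ($k\ge1$) swaps $p_k,p_{k+1}$; $s_0$ applies the standard Cremona transformation $(x_1:\dots:x_m)\mapsto(x_1^{-1}:\dots:x_m^{-1})$ (in coordinates where $p_1,\dots,p_m$ are the coordinate points) to $p_{m+1},\dots,p_n$. The induced left action on $\mathbb{C}(u)$, $w(\varphi)([P])=\varphi([P].w)$, defines rational functions $S^w_{i,j}$ by $w(u_{i,j})=S^w_{i,j}(u)$. With $\varepsilon_{i,j}=\varepsilon_i-\varepsilon_j$ and $\alpha_0=\varepsilon_0-\varepsilon_1-\dots-\varepsilon_m$, put $$u_{i,j}(\varepsilon)=\frac{[\alpha_0+\varepsilon_{m,m+1}][\varepsilon_{i,m+1}]}{[\varepsilon_{m,m+1}][\alpha_0+\varepsilon_{i,m+1}]}\cdot\frac{[\alpha_0+\varepsilon_{i,j}][\varepsilon_{m,j}]}{[\varepsilon_{i,j}][\alpha_0+\varepsilon_{m,j}]}.$$ For generic $\varepsilon$ this is the $u$-coordinate of the configuration $[p(\varepsilon_1),\dots,p(\varepsilon_n)]$ where $p(t)=\big(\frac{[\lambda+\mu_1-t]}{[\lambda][\mu_1-t]}:\dots:\frac{[\lambda+\mu_m-t]}{[\lambda][\mu_m-t]}\big)$ for any $\lambda,\mu$ with $\varepsilon_0=\lambda+\mu_1+\dots+\mu_m$. *)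

theory Defs
  imports "HOL-Analysis.Analysis"
begin

definition riemann_relation :: "(complex \<Rightarrow> complex) \<Rightarrow> bool" where
  "riemann_relation s \<longleftrightarrow> (\<forall>x y u v.
     s (x+y) * s (x-y) * s (u+v) * s (u-v) =
     s (x+u) * s (x-u) * s (y+v) * s (y-v) - s (x+v) * s (x-v) * s (y+u) * s (y-u))"

text \<open>A vector of h_{m,n} is a coefficient function x with x = sum_{j=0..n} x_j e_j;
  the carrier is the set of such functions vanishing beyond n.  A linear functional
  on h is represented by its values on the basis e_0,...,e_n.\<close>

definition hspace :: "nat \<Rightarrow> (nat \<Rightarrow> complex) set" where
  "hspace n = {x. \<forall>j>n. x j = 0}"

text \<open>Gram matrix: <e_0,e_0> = -(m-2), <e_j,e_j> = 1, orthogonal basis.\<close>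
definition gram :: "nat \<Rightarrow> nat \<Rightarrow> complex" where
  "gram m j = (if j = 0 then - (of_nat m - 2) else 1)"

definition pairing :: "nat \<Rightarrow> (nat \<Rightarrow> complex) \<Rightarrow> (nat \<Rightarrow> complex) \<Rightarrow> complex" where
  "pairing n lam x = (\<Sum>j\<le>n. lam j * x j)"

text \<open>epsilon_k = <e_k, . > : its value on e_j is <e_k,e_j>.\<close>
definition epsf :: "nat \<Rightarrow> nat \<Rightarrow> (nat \<Rightarrow> complex)" where
  "epsf m k = (\<lambda>j. if j = k then gram m k else 0)"

definition hvec :: "nat \<Rightarrow> nat \<Rightarrow> (nat \<Rightarrow> complex)" where
  "hvec m k = (if k = 0
      then (\<lambda>j. if j = 0 then 1 else if 1 \<le> j \<and> j \<le> m then -1 else 0)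
      else (\<lambda>j. if j = k then 1 else if j = k + 1 then -1 else 0))"

text \<open>alpha_k = <h_k, . > : its value on e_j is <h_k,e_j>.\<close>
definition alpha :: "nat \<Rightarrow> nat \<Rightarrow> (nat \<Rightarrow> complex)" where
  "alpha m k = (\<lambda>j. gram m j * hvec m k j)"

definition srefl :: "nat \<Rightarrow> nat \<Rightarrow> nat \<Rightarrow> (nat \<Rightarrow> complex) \<Rightarrow> (nat \<Rightarrow> complex)" where
  "srefl m n k lam = (\<lambda>j. lam j - pairing n lam (hvec m k) * alpha m k j)"

text \<open>An element w of W_{m,n} is given by a word [a_1,...,a_r] in the generators
  s_0,...,s_{n-1}, w = s_{a_1} ... s_{a_r}; left linear action on h^*.\<close>
definition wact :: "nat \<Rightarrow> nat \<Rightarrow> nat list \<Rightarrow> (nat \<Rightarrow> complex) \<Rightarrow> (nat \<Rightarrow> complex)" where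
  "wact m n ws lam = foldr (srefl m n) ws lam"

text \<open>e k stands for the value of epsilon_k.\<close>
definition ufun :: "(complex \<Rightarrow> complex) \<Rightarrow> nat \<Rightarrow> nat \<Rightarrow> nat \<Rightarrow> (nat \<Rightarrow> complex) \<Rightarrow> complex" where
  "ufun s m i j e =
    (let a0 = e 0 - (\<Sum>l=1..m. e l) in
      (s (a0 + (e m - e (m+1))) * s (e i - e (m+1))) /
      (s (e m - e (m+1)) * s (a0 + (e i - e (m+1)))) *
      ((s (a0 + (e i - e j)) * s (e m - e j)) /
       (s (e i - e j) * s (a0 + (e m - e j)))))"

text \<open>A configuration is P :: nat => (nat => complex): P j is a homogeneous coordinate
  vector (coordinates indexed 1..m) of the point p_j, j = 1..n.\<close>

definition detn :: "nat \<Rightarrow> (nat \<Rightarrow> nat \<Rightarrow> complex) \<Rightarrow> complex" where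
  "detn m M = (\<Sum>\<pi> | \<pi> permutes {1..m}. of_int (sign \<pi>) * (\<Prod>r\<in>{1..m}. M r (\<pi> r)))"

text \<open>Determinant of the matrix with columns p_1,...,p_m, column l replaced by q
  (Cramer numerator for the l-th coordinate of q in the basis p_1,...,p_m).\<close>
definition Dl :: "nat \<Rightarrow> (nat \<Rightarrow> nat \<Rightarrow> complex) \<Rightarrow> nat \<Rightarrow> (nat \<Rightarrow> complex) \<Rightarrow> complex" where
  "Dl m P l q = detn m (\<lambda>r c. if c = l then q r else P c r)"

text \<open>Coordinates of q with respect to the basis p_1,...,p_m.\<close>
definition bcoord :: "nat \<Rightarrow> (nat \<Rightarrow> nat \<Rightarrow> complex) \<Rightarrow> nat \<Rightarrow> (nat \<Rightarrow> complex) \<Rightarrow> complex" where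
  "bcoord m P l q = Dl m P l q / detn m (\<lambda>r c. P c r)"

text \<open>u-coordinates of [P]: the normal form is obtained by the linear change of
  coordinates to the basis p_1..p_m followed by the diagonal rescaling making
  p_{m+1} = (1:...:1), then dehomogenising by the last coordinate.\<close>
definition ucoord :: "nat \<Rightarrow> (nat \<Rightarrow> nat \<Rightarrow> complex) \<Rightarrow> nat \<Rightarrow> nat \<Rightarrow> complex" where
  "ucoord m P i j =
     (bcoord m P i (P j) / bcoord m P i (P (m+1))) /
     (bcoord m P m (P j) / bcoord m P m (P (m+1)))"

definition normal_config :: "nat \<Rightarrow> (nat \<Rightarrow> nat \<Rightarrow> complex) \<Rightarrow> (nat \<Rightarrow> nat \<Rightarrow> complex)" where
  "normal_config m u = (\<lambda>j. if j \<le> m then (\<lambda>r. if r = j then 1 else 0)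
                        else if j = m + 1 then (\<lambda>r. 1)
                        else (\<lambda>r. if r = m then 1 else u r j))"

text \<open>s_k (k >= 1): swap p_k and p_{k+1};  s_0: standard Cremona transformation in the
  coordinates where p_1..p_m are coordinate points, applied to p_{m+1},...,p_n.\<close>
definition cswap :: "nat \<Rightarrow> (nat \<Rightarrow> nat \<Rightarrow> complex) \<Rightarrow> (nat \<Rightarrow> nat \<Rightarrow> complex)" where
  "cswap k P = P(k := P (k+1), k+1 := P k)"

definition ccremona :: "nat \<Rightarrow> nat \<Rightarrow> (nat \<Rightarrow> nat \<Rightarrow> complex) \<Rightarrow> (nat \<Rightarrow> nat \<Rightarrow> complex)" where
  "ccremona m n P = (\<lambda>j. if m + 1 \<le> j \<and> j \<le> n
       then (\<lambda>r. \<Sum>l=1..m. inverse (bcoord m P l (P j)) * P l r)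
       else P j)"

definition ract :: "nat \<Rightarrow> nat \<Rightarrow> (nat \<Rightarrow> nat \<Rightarrow> complex) \<Rightarrow> nat \<Rightarrow> (nat \<Rightarrow> nat \<Rightarrow> complex)" where
  "ract m n P k = (if k = 0 then ccremona m n P else cswap k P)"

text \<open>Right action [P].w for w = s_{a_1} ... s_{a_r}: first s_{a_1}, then s_{a_2}, ...\<close>
definition config_act :: "nat \<Rightarrow> nat \<Rightarrow> (nat \<Rightarrow> nat \<Rightarrow> complex) \<Rightarrow> nat list \<Rightarrow> (nat \<Rightarrow> nat \<Rightarrow> complex)" where
  "config_act m n P ws = foldl (ract m n) P ws"

text \<open>S^w_{i,j}(u) = u_{i,j}([P_u].w), i.e. w(u_{i,j}).\<close>
definition Sw :: "nat \<Rightarrow> nat \<Rightarrow> nat list \<Rightarrow> nat \<Rightarrow> nat \<Rightarrow> (nat \<Rightarrow> nat \<Rightarrow> complex) \<Rightarrow> complex" where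
  "Sw m n ws i j u = ucoord m (config_act m n (normal_config m u) ws) i j"

end

theory Submission
  imports Defs "Jordan_Normal_Form.Determinant" "HOL-Complex_Analysis.Complex_Analysis"
begin

text \<open>For a single generator s_k both sides change
  by the same explicit rational map S^{s_k} of the table u: on configurations this is Cramer's rule
  (the Cremona map inverts all coordinates, transpositions permute or rescale them, and exchanging
  p_m with p_{m+1} gives u \<mapsto> 1 - u); on the u_{i,j}(epsilon) it is a direct substitution, except
  that for s_m the identity u \<mapsto> 1 - u is the three-term form of the Riemann relation. The
  induction needs nonvanishing of every theta value at the intermediate points; each is s applied
  to a nonzero linear functional, and a nonzero entire function has dense nonvanishing set, so this
  holds on an open dense subset of h_{m,n}.\<close>

section \<open>Determinants and coordinates with respect to p_1, ..., p_m\<close>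

definition mat_1based :: "nat \<Rightarrow> (nat \<Rightarrow> nat \<Rightarrow> complex) \<Rightarrow> complex mat" where
  "mat_1based m M = mat m m (\<lambda>(r, c). M (Suc r) (Suc c))"

lemma mat_1based_carrier [simp]: "mat_1based m M \<in> carrier_mat m m"
  by (simp add: mat_1based_def)

lemma mat_1based_dim [simp]: "dim_row (mat_1based m M) = m" "dim_col (mat_1based m M) = m"
  by (simp_all add: mat_1based_def)

lemma mat_1based_index [simp]: "r < m \<Longrightarrow> c < m \<Longrightarrow> mat_1based m M $$ (r, c) = M (Suc r) (Suc c)"
  by (simp add: mat_1based_def)

lemma detn_eq_det: "detn m M = det (mat_1based m M)"
proof -
  let ?shift = "\<lambda>p x. if x \<in> {1..m} then Suc (p (x - 1)) else x"
  have bij_Suc: "bij_betw Suc {0..<m} {1..m}"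
    by (simp add: bij_betw_def image_Suc_atLeastLessThan atLeastLessThanSuc_atLeastAtMost)
  have sign_shift: "sign (?shift p) = sign p" if "p permutes {0..<m}" for p
  proof -
    interpret permutes_bij_finite p "{0..<m}" "{1..m}" Suc "\<lambda>x. x - 1" "?shift p"
      by unfold_locales (use that bij_Suc in auto)
    show ?thesis by (rule sign_p')
  qed
  have "inv_into {0..<m} Suc x = x - 1" if "x \<in> {1..m}" for x
    by (rule inv_into_f_eq) (use that in auto)
  then have "(\<lambda>\<pi> x. if x \<in> {1..m} then Suc (\<pi> (inv_into {0..<m} Suc x)) else x) = ?shift"
    by (intro ext) auto
  then have bij: "bij_betw ?shift {p. p permutes {0..<m}} {\<pi>. \<pi> permutes {1..m}}"
    using bij_betw_permutations[OF bij_Suc] by simp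
  have "det (mat_1based m M) =
      (\<Sum>p | p permutes {0..<m}. of_int (sign p) * (\<Prod>i<m. M (Suc i) (Suc (p i))))"
    unfolding det_def by (auto intro!: sum.cong prod.cong simp: permutes_in_image lessThan_atLeast0)
  also have "\<dots> = (\<Sum>p | p permutes {0..<m}.
      of_int (sign (?shift p)) * (\<Prod>r\<in>{1..m}. M r (?shift p r)))"
  proof (intro sum.cong refl)
    fix p assume "p \<in> {p. p permutes {0..<m}}"
    then show "of_int (sign p) * (\<Prod>i<m. M (Suc i) (Suc (p i))) =
        of_int (sign (?shift p)) * (\<Prod>r\<in>{1..m}. M r (?shift p r))"
      using sign_shift[of p] by (simp add: prod.atLeast1_atMost_eq)
  qed
  also have "\<dots> = detn m M"
    unfolding detn_def by (rule sum.reindex_bij_betw[OF bij])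
  finally show ?thesis by simp
qed

lemma detn_cong:
  assumes "\<And>r c. r \<in> {1..m} \<Longrightarrow> c \<in> {1..m} \<Longrightarrow> M r c = M' r c"
  shows "detn m M = detn m M'"
  unfolding detn_def
  by (intro sum.cong refl arg_cong2[where f = "(*)"] prod.cong)
     (use assms permutes_in_image in fastforce)

lemma detn_transpose_cols:
  assumes "a \<in> {1..m}" "b \<in> {1..m}" "a \<noteq> b"
  shows "detn m (\<lambda>r c. M r (Transposition.transpose a b c)) = - detn m M"
proof -
  have "mat_1based m (\<lambda>r c. M r (Transposition.transpose a b c)) =
      swapcols (a - 1) (b - 1) (mat_1based m M)"
    by (rule eq_matI) (use assms in \<open>auto simp: transpose_def\<close>)
  moreover have "a - 1 < m" "b - 1 < m" "a - 1 \<noteq> b - 1" using assms by auto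
  ultimately show ?thesis
    unfolding detn_eq_det using det_swapcols[of "a - 1" m "b - 1" "mat_1based m M"] by simp
qed

lemma bcoord_eqI:
  assumes D: "detn m (\<lambda>r c. P c r) \<noteq> 0"
    and q: "\<And>r. r \<in> {1..m} \<Longrightarrow> q r = (\<Sum>k=1..m. x k * P k r)"
    and l: "l \<in> {1..m}"
  shows "bcoord m P l q = x l"
proof -
  let ?A = "mat_1based m (\<lambda>r c. P c r)"
  let ?x = "vec m (\<lambda>k. x (Suc k))"
  have "?A *\<^sub>v ?x = vec m (\<lambda>r. q (Suc r))"
  proof (rule eq_vecI)
    fix r assume "r < dim_vec (vec m (\<lambda>r. q (Suc r)))"
    then have r: "r < m" by simp
    have "(?A *\<^sub>v ?x) $ r = (\<Sum>k<m. x (Suc k) * P (Suc k) (Suc r))"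
      using r by (simp add: scalar_prod_def lessThan_atLeast0 mult.commute)
    also have "\<dots> = q (Suc r)"
      using q[of "Suc r"] r by (simp add: sum.atLeast1_atMost_eq)
    finally show "(?A *\<^sub>v ?x) $ r = vec m (\<lambda>r. q (Suc r)) $ r" using r by simp
  qed simp
  then have "replace_col ?A (?A *\<^sub>v ?x) (l - 1) = mat_1based m (\<lambda>r c. if c = l then q r else P c r)"
    by (intro eq_matI) (use l in \<open>auto simp: replace_col_def\<close>)
  moreover have "l - 1 < m" "Suc (l - 1) = l" using l by auto
  ultimately have "Dl m P l q = x l * detn m (\<lambda>r c. P c r)"
    unfolding Dl_def detn_eq_det
    using cramer_lemma_mat[of ?A m ?x "l - 1"] by simp
  then show ?thesis using D by (simp add: bcoord_def)
qed

lemma bcoord_expansion: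
  assumes D: "detn m (\<lambda>r c. P c r) \<noteq> 0" and r: "r \<in> {1..m}"
  shows "q r = (\<Sum>k=1..m. bcoord m P k q * P k r)"
proof -
  let ?A = "mat_1based m (\<lambda>r c. P c r)"
  have "?A \<in> Units (ring_mat TYPE(complex) m undefined)"
    using det_non_zero_imp_unit[OF mat_1based_carrier] D by (simp add: detn_eq_det)
  then obtain B where B: "B \<in> carrier_mat m m" "?A * B = 1\<^sub>m m"
    unfolding Units_def ring_mat_def by auto
  let ?q = "vec m (\<lambda>r. q (Suc r))"
  define y where "y = B *\<^sub>v ?q"
  have y: "y \<in> carrier_vec m" "?A *\<^sub>v y = ?q"
    unfolding y_def using B
    by (auto simp del: mat_1based_carrier)
       (metis assoc_mult_mat_vec carrier_vecI dim_vec one_mult_mat_vec mat_1based_carrier)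
  define x where "x = (\<lambda>k. y $ (k - 1))"
  have rep: "q r' = (\<Sum>k=1..m. x k * P k r')" if r': "r' \<in> {1..m}" for r'
  proof -
    have "q r' = (?A *\<^sub>v y) $ (r' - 1)" using y(2) r' by auto
    also have "\<dots> = (\<Sum>k<m. P (Suc k) r' * y $ k)"
      using r' y(1) by (auto simp: scalar_prod_def lessThan_atLeast0 intro!: sum.cong)
    also have "\<dots> = (\<Sum>k=1..m. x k * P k r')"
      by (simp add: sum.atLeast1_atMost_eq x_def mult.commute)
    finally show ?thesis .
  qed
  have "bcoord m P k q = x k" if "k \<in> {1..m}" for k
    by (rule bcoord_eqI[OF D rep that])
  then show ?thesis using rep[OF r] by simp
qed

lemma bcoord_cong:
  assumes "\<And>c r. c \<in> {1..m} \<Longrightarrow> r \<in> {1..m} \<Longrightarrow> P' c r = P c r"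
  shows "bcoord m P' l q = bcoord m P l q"
proof -
  have "detn m (\<lambda>r c. P' c r) = detn m (\<lambda>r c. P c r)" "Dl m P' l q = Dl m P l q"
    unfolding Dl_def by (auto intro: detn_cong simp: assms)
  then show ?thesis by (simp add: bcoord_def)
qed

lemma bcoord_transpose_basis:
  assumes D: "detn m (\<lambda>r c. P c r) \<noteq> 0" and ab: "a \<in> {1..m}" "b \<in> {1..m}" "a \<noteq> b"
    and l: "l \<in> {1..m}"
  shows "bcoord m (P \<circ> Transposition.transpose a b) l q = bcoord m P (Transposition.transpose a b l) q"
proof -
  let ?\<tau> = "Transposition.transpose a b"
  have \<tau>: "?\<tau> permutes {1..m}" using ab by (intro permutes_swap_id) auto
  have D': "detn m (\<lambda>r c. (P \<circ> ?\<tau>) c r) \<noteq> 0"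
    using detn_transpose_cols[OF ab, of "\<lambda>r c. P c r"] D by simp
  have "q r = (\<Sum>l=1..m. bcoord m P (?\<tau> l) q * (P \<circ> ?\<tau>) l r)" if "r \<in> {1..m}" for r
    using bcoord_expansion[OF D that, of q] sum.permute[OF \<tau>, of "\<lambda>l. bcoord m P l q * P l r"]
    by (simp add: o_def)
  then show ?thesis by (rule bcoord_eqI[OF D' _ l])
qed

lemma bcoord_exchange:
  assumes D: "detn m (\<lambda>r c. P c r) \<noteq> 0" and l0: "l0 \<in> {1..m}"
    and \<beta>: "bcoord m P l0 q0 \<noteq> 0"
    and P': "\<And>c. c \<in> {1..m} \<Longrightarrow> P' c = (if c = l0 then q0 else P c)"
    and l: "l \<in> {1..m}"
  shows "bcoord m P' l q = (if l = l0 then bcoord m P l0 q / bcoord m P l0 q0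
     else bcoord m P l q - bcoord m P l0 q * bcoord m P l q0 / bcoord m P l0 q0)"
proof -
  define b where "b = (\<lambda>l q. bcoord m P l q)"
  define \<beta> where "\<beta> = b l0 q0"
  have "detn m (\<lambda>r c. P' c r) = Dl m P l0 q0"
    unfolding Dl_def by (rule detn_cong) (simp add: P')
  also have "\<dots> = \<beta> * detn m (\<lambda>r c. P c r)"
    using D by (simp add: \<beta>_def b_def bcoord_def)
  finally have D': "detn m (\<lambda>r c. P' c r) \<noteq> 0" using D \<beta> by (simp add: \<beta>_def b_def)
  define x where "x = (\<lambda>l. if l = l0 then b l0 q / \<beta> else b l q - b l0 q * b l q0 / \<beta>)"
  have split: "(\<Sum>l=1..m. f l) = f l0 + (\<Sum>l\<in>{1..m} - {l0}. f l)" for f :: "nat \<Rightarrow> complex"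
    using l0 by (simp add: sum.remove)
  have "q r = (\<Sum>l=1..m. x l * P' l r)" if r: "r \<in> {1..m}" for r
  proof -
    have q: "q r = b l0 q * P l0 r + (\<Sum>l\<in>{1..m} - {l0}. b l q * P l r)"
      using bcoord_expansion[OF D r, of q] split by (simp add: b_def)
    have q0: "q0 r = \<beta> * P l0 r + (\<Sum>l\<in>{1..m} - {l0}. b l q0 * P l r)"
      using bcoord_expansion[OF D r, of q0] split by (simp add: b_def \<beta>_def)
    have "(\<Sum>l=1..m. x l * P' l r) =
        b l0 q / \<beta> * q0 r + (\<Sum>l\<in>{1..m} - {l0}. (b l q - b l0 q * b l q0 / \<beta>) * P l r)"
      unfolding split using P' l0 by (intro arg_cong2[where f = "(+)"] sum.cong) (auto simp: x_def)
    also have "\<dots> = q r"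
      unfolding q q0 using \<beta>
      by (simp add: \<beta>_def b_def sum_subtractf sum_distrib_left algebra_simps)
    finally show ?thesis by simp
  qed
  then show ?thesis
    using bcoord_eqI[OF D' _ l] by (simp add: x_def b_def \<beta>_def)
qed

lemma ucoord_nonzeroD:
  assumes "ucoord m P i j \<noteq> 0"
  shows "detn m (\<lambda>r c. P c r) \<noteq> 0" "bcoord m P i (P j) \<noteq> 0" "bcoord m P i (P (m+1)) \<noteq> 0"
    "bcoord m P m (P j) \<noteq> 0" "bcoord m P m (P (m+1)) \<noteq> 0"
proof -
  have "bcoord m P l q = 0" if "detn m (\<lambda>r c. P c r) = 0" for l q
    using that by (simp add: bcoord_def)
  then show "detn m (\<lambda>r c. P c r) \<noteq> 0" "bcoord m P i (P j) \<noteq> 0" "bcoord m P i (P (m+1)) \<noteq> 0"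
    "bcoord m P m (P j) \<noteq> 0" "bcoord m P m (P (m+1)) \<noteq> 0"
    using assms by (auto simp: ucoord_def)
qed

section \<open>The rational maps S^{s_k} and the u-coordinates\<close>

definition Sgen :: "nat \<Rightarrow> nat \<Rightarrow> (nat \<Rightarrow> nat \<Rightarrow> complex) \<Rightarrow> nat \<Rightarrow> nat \<Rightarrow> complex" where
  "Sgen m k u i j =
    (if k = 0 then inverse (u i j)
     else if k + 2 \<le> m then u (Transposition.transpose k (Suc k) i) j
     else if k = m - 1 then (if i = m - 1 then inverse (u (m-1) j) else u i j / u (m-1) j)
     else if k = m then 1 - u i j
     else if k = m + 1 then (if j = m + 2 then inverse (u i (m+2)) else u i j / u i (m+2))
     else u i (Transposition.transpose k (Suc k) j))"

lemma Sgen_cong: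
  assumes u: "\<And>i j. i \<in> {1..m-1} \<Longrightarrow> j \<in> {m+2..n} \<Longrightarrow> u i j = u' i j"
    and k: "k < n" and i: "i \<in> {1..m-1}" and j: "j \<in> {m+2..n}"
  shows "Sgen m k u i j = Sgen m k u' i j"
proof -
  have "Transposition.transpose k (Suc k) i \<in> {1..m-1}" if "1 \<le> k" "k + 2 \<le> m"
    using i that by (auto simp: Transposition.transpose_def)
  moreover have "Transposition.transpose k (Suc k) j \<in> {m+2..n}" if "m + 2 \<le> k"
    using j k that by (auto simp: Transposition.transpose_def)
  moreover have "m - 1 \<in> {1..m-1}" "m + 2 \<in> {m+2..n}" if "k \<noteq> 0" "\<not> k + 2 \<le> m"
    using i j that by auto
  ultimately show ?thesis
    unfolding Sgen_def using u i j by auto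
qed

lemma ucoord_normal_config:
  assumes i: "i \<in> {1..m-1}" and j: "m + 1 < j"
  shows "ucoord m (normal_config m u) i j = u i j"
proof -
  let ?P = "normal_config m u"
  have "mat_1based m (\<lambda>r c. ?P c r) = 1\<^sub>m m"
    by (rule eq_matI) (auto simp: normal_config_def)
  then have D: "detn m (\<lambda>r c. ?P c r) \<noteq> 0" by (simp add: detn_eq_det)
  have "(\<Sum>k=1..m. q k * ?P k r) = (\<Sum>k=1..m. if k = r then q k else 0)" for q r
    by (rule sum.cong) (auto simp: normal_config_def)
  then have "q r = (\<Sum>k=1..m. q k * ?P k r)" if "r \<in> {1..m}" for q r
    using that by (simp add: sum.delta)
  then have bc: "bcoord m ?P l q = q l" if "l \<in> {1..m}" for l q
    using bcoord_eqI[OF D _ that] by blast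
  have "i \<in> {1..m}" "m \<in> {1..m}" "i \<noteq> m" using i by auto
  then show ?thesis unfolding ucoord_def bc[OF \<open>i \<in> {1..m}\<close>] bc[OF \<open>m \<in> {1..m}\<close>]
    using j by (simp add: normal_config_def)
qed

lemma ucoord_ccremona:
  assumes D: "detn m (\<lambda>r c. P c r) \<noteq> 0" and i: "i \<in> {1..m}" and j: "j \<in> {m+1..n}"
  shows "ucoord m (ccremona m n P) i j = inverse (ucoord m P i j)"
proof -
  have bc: "bcoord m (ccremona m n P) l q = bcoord m P l q" for l q
    by (rule bcoord_cong) (simp add: ccremona_def)
  have new: "bcoord m P l (ccremona m n P j') = inverse (bcoord m P l (P j'))"
    if "j' \<in> {m+1..n}" "l \<in> {1..m}" for j' l
    by (rule bcoord_eqI[OF D _ that(2)]) (use that in \<open>simp add: ccremona_def\<close>)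
  have "m \<in> {1..m}" "m + 1 \<in> {m+1..n}" using i j by auto
  then show ?thesis unfolding ucoord_def bc
    using new[OF j i] new[OF _ i, of "m+1"] new[OF j \<open>m \<in> {1..m}\<close>] new[OF _ \<open>m \<in> {1..m}\<close>, of "m+1"]
    by (simp add: divide_inverse mult_ac)
qed

lemma cswap_eq_comp: "cswap k P = P \<circ> Transposition.transpose k (Suc k)"
  by (auto simp: cswap_def Transposition.transpose_def fun_eq_iff)

lemma ucoord_cswap_below:
  assumes D: "detn m (\<lambda>r c. P c r) \<noteq> 0" and k: "1 \<le> k" "k + 2 \<le> m"
    and i: "i \<in> {1..m}" and j: "m + 1 \<le> j"
  shows "ucoord m (cswap k P) i j = ucoord m P (Transposition.transpose k (Suc k) i) j"
proof -
  let ?\<tau> = "Transposition.transpose k (Suc k)"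
  have kk: "k \<in> {1..m}" "Suc k \<in> {1..m}" "k \<noteq> Suc k" "m \<in> {1..m}" using k by auto
  have "?\<tau> m = m" "?\<tau> j = j" "?\<tau> (m+1) = m+1" using k j by (auto simp: Transposition.transpose_def)
  then show ?thesis
    unfolding ucoord_def cswap_eq_comp
    using bcoord_transpose_basis[OF D kk(1-3) i] bcoord_transpose_basis[OF D kk(1-3) kk(4)] by simp
qed

lemma ucoord_cswap_m_minus_1:
  assumes D: "detn m (\<lambda>r c. P c r) \<noteq> 0" and m: "2 \<le> m"
    and i: "i \<in> {1..m-1}" and j: "m + 1 \<le> j"
    and nz: "bcoord m P (m-1) (P j) \<noteq> 0" "bcoord m P (m-1) (P (m+1)) \<noteq> 0"
       "bcoord m P m (P j) \<noteq> 0" "bcoord m P m (P (m+1)) \<noteq> 0"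
  shows "ucoord m (cswap (m-1) P) i j =
    (if i = m - 1 then inverse (ucoord m P (m-1) j) else ucoord m P i j / ucoord m P (m-1) j)"
proof -
  let ?\<tau> = "Transposition.transpose (m-1) m"
  have mm: "m - 1 \<in> {1..m}" "m \<in> {1..m}" "m - 1 \<noteq> m" "Suc (m - 1) = m" "i \<in> {1..m}"
    using m i by auto
  have \<tau>: "?\<tau> j = j" "?\<tau> (m+1) = m+1" "?\<tau> m = m - 1" "?\<tau> i = (if i = m - 1 then m else i)"
    using i j m by (auto simp: Transposition.transpose_def)
  have "bcoord m (cswap (m-1) P) l q = bcoord m P (?\<tau> l) q" if "l \<in> {1..m}" for l q
    using bcoord_transpose_basis[OF D mm(1-3) that] unfolding cswap_eq_comp mm(4) .
  then show ?thesis unfolding ucoord_def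
    using mm(2,5) \<tau> nz by (simp add: cswap_eq_comp mm(4) field_simps)
qed

lemma ucoord_cswap_m:
  assumes D: "detn m (\<lambda>r c. P c r) \<noteq> 0" and i: "i \<in> {1..m-1}" and j: "m + 2 \<le> j"
    and nz: "bcoord m P m (P (m+1)) \<noteq> 0" "bcoord m P i (P (m+1)) \<noteq> 0" "bcoord m P m (P j) \<noteq> 0"
  shows "ucoord m (cswap m P) i j = 1 - ucoord m P i j"
proof -
  define b where "b = (\<lambda>l q. bcoord m P l q)"
  define b' where "b' = (\<lambda>l q. bcoord m (cswap m P) l q)"
  have mi: "m \<in> {1..m}" "i \<in> {1..m}" "i \<noteq> m" using i by auto
  have exch: "b' l q = (if l = m then b m q / b m (P (m+1))
      else b l q - b m q * b l (P (m+1)) / b m (P (m+1)))" if "l \<in> {1..m}" for l q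
    unfolding b_def b'_def by (rule bcoord_exchange[OF D mi(1) nz(1) _ that]) (auto simp: cswap_def)
  have Pm: "b l (P m) = (if l = m then 1 else 0)" if "l \<in> {1..m}" for l
  proof -
    have "(\<Sum>k=1..m. (if k = m then 1 else 0) * P k r) = (\<Sum>k=1..m. if k = m then P k r else 0)" for r
      by (rule sum.cong) auto
    then show ?thesis
      unfolding b_def by (intro bcoord_eqI[OF D _ that]) (simp add: sum.delta')
  qed
  have "cswap m P j = P j" "cswap m P (m+1) = P m" using j by (auto simp: cswap_def)
  then show ?thesis
    unfolding ucoord_def b'_def[symmetric] exch[OF mi(1)] exch[OF mi(2)]
    using nz mi(3) Pm[OF mi(1)] Pm[OF mi(2)]
    by (simp add: b_def[symmetric] field_simps)
qed

lemma ucoord_cswap_m_plus_1: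
  assumes j: "m + 2 \<le> j" and nz: "bcoord m P i (P (m+1)) \<noteq> 0" "bcoord m P m (P (m+1)) \<noteq> 0"
  shows "ucoord m (cswap (m+1) P) i j =
    (if j = m + 2 then inverse (ucoord m P i (m+2)) else ucoord m P i j / ucoord m P i (m+2))"
proof -
  have "bcoord m (cswap (m+1) P) l q = bcoord m P l q" for l q
    by (rule bcoord_cong) (auto simp: cswap_def)
  then show ?thesis unfolding ucoord_def using nz j
    by (auto simp: cswap_def field_simps)
qed

lemma ucoord_cswap_above:
  assumes "m + 2 \<le> k"
  shows "ucoord m (cswap k P) i j = ucoord m P i (Transposition.transpose k (Suc k) j)"
proof -
  have "bcoord m (cswap k P) l q = bcoord m P l q" for l q
    by (rule bcoord_cong) (use assms in \<open>auto simp: cswap_def\<close>)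
  moreover have "cswap k P (m+1) = P (m+1)" "cswap k P j = P (Transposition.transpose k (Suc k) j)"
    using assms by (auto simp: cswap_eq_comp)
  ultimately show ?thesis unfolding ucoord_def by simp
qed

text \<open>Nonvanishing of all u_{i,j}(P) makes p_1, ..., p_{m+1} a projective frame and excludes
  the indeterminacy of every generator.\<close>

lemma ucoord_ract:
  assumes m: "2 \<le> m" and n: "m + 2 \<le> n" and k: "k < n"
    and nz: "\<forall>i\<in>{1..m-1}. \<forall>j\<in>{m+2..n}. ucoord m P i j \<noteq> 0"
    and i: "i \<in> {1..m-1}" and j: "j \<in> {m+2..n}"
  shows "ucoord m (ract m n P k) i j = Sgen m k (ucoord m P) i j"
proof -
  note nzD = ucoord_nonzeroD[OF nz[rule_format]]
  have D: "detn m (\<lambda>r c. P c r) \<noteq> 0" using nzD(1)[OF i j] .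
  have i': "i \<in> {1..m}" and mi: "m - 1 \<in> {1..m-1}"
    using i m n by auto
  have m_neq: "m \<noteq> 0" "m - 1 \<noteq> 0" "m \<noteq> m - Suc 0" "Suc m \<noteq> m - Suc 0" "\<not> m + 2 \<le> m" "\<not> m + 1 \<le> m"
    using m by auto
  consider "k = 0" | "1 \<le> k" "k + 2 \<le> m" | "k = m - 1" "k \<noteq> 0" | "k = m" | "k = m + 1" | "m + 2 \<le> k"
    using m by linarith
  then show ?thesis
  proof cases
    case 1
    then show ?thesis using ucoord_ccremona[OF D i'] j by (simp add: ract_def Sgen_def m_neq)
  next
    case 2
    then show ?thesis using ucoord_cswap_below[OF D 2 i'] j by (simp add: ract_def Sgen_def m_neq)
  next
    case 3
    then show ?thesis
      using ucoord_cswap_m_minus_1[OF D m i _ nzD(2,3)[OF mi j] nzD(4,5)[OF i j]] j m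
      by (simp add: ract_def Sgen_def m_neq)
  next
    case 4
    then show ?thesis using ucoord_cswap_m[OF D i _ nzD(5,3,4)[OF i j]] j m
      by (simp add: ract_def Sgen_def m_neq)
  next
    case 5
    then show ?thesis using ucoord_cswap_m_plus_1[OF _ nzD(3,5)[OF i j]] j m
      by (simp add: ract_def Sgen_def m_neq)
  next
    case 6
    then have "k \<noteq> m - 1" "k \<noteq> m + 1" by auto
    with 6 show ?thesis using ucoord_cswap_above[OF 6] by (simp add: ract_def Sgen_def)
  qed
qed

section \<open>The functions u_{i,j}(epsilon) under the reflections\<close>

definition alpha0_of :: "nat \<Rightarrow> (nat \<Rightarrow> complex) \<Rightarrow> complex" where
  "alpha0_of m e = e 0 - (\<Sum>l=1..m. e l)"

definition nondegenerate :: "(complex \<Rightarrow> complex) \<Rightarrow> nat \<Rightarrow> nat \<Rightarrow> (nat \<Rightarrow> complex) \<Rightarrow> bool" where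
  "nondegenerate s m n e \<longleftrightarrow> (\<forall>p\<in>{1..m}. \<forall>q\<in>{m+1..n}.
     s (e p - e q) \<noteq> 0 \<and> s (alpha0_of m e + (e p - e q)) \<noteq> 0)"

text \<open>If e l is the value of epsilon_l at x, then reflect_coords m e k l is the value of
  s_k.epsilon_l at x.\<close>

definition reflect_coords :: "nat \<Rightarrow> (nat \<Rightarrow> complex) \<Rightarrow> nat \<Rightarrow> nat \<Rightarrow> complex" where
  "reflect_coords m e k =
    (if k = 0 then (\<lambda>l. e l - gram m l * hvec m 0 l * alpha0_of m e)
     else e \<circ> Transposition.transpose k (Suc k))"

lemma ufun_eq: "ufun s m i j e =
      (s (alpha0_of m e + (e m - e (m+1))) * s (e i - e (m+1))) /
      (s (e m - e (m+1)) * s (alpha0_of m e + (e i - e (m+1)))) *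
      ((s (alpha0_of m e + (e i - e j)) * s (e m - e j)) /
       (s (e i - e j) * s (alpha0_of m e + (e m - e j))))"
  by (simp add: ufun_def alpha0_of_def Let_def)

lemma nondegenerateD:
  assumes "nondegenerate s m n e" "p \<in> {1..m}" "q \<in> {m+1..n}"
  shows "s (e p - e q) \<noteq> 0" "s (alpha0_of m e + (e p - e q)) \<noteq> 0"
  using assms by (auto simp: nondegenerate_def)

lemma ufun_nonzero:
  assumes "nondegenerate s m n e" "i \<in> {1..m}" "j \<in> {m+1..n}"
  shows "ufun s m i j e \<noteq> 0"
proof -
  have "m \<in> {1..m}" "m + 1 \<in> {m+1..n}" using assms by auto
  then show ?thesis
    unfolding ufun_eq using nondegenerateD[OF assms(1)] assms(2,3) by simp
qed

lemma alpha0_of_permute: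
  assumes "\<sigma> permutes {1..m}"
  shows "alpha0_of m (e \<circ> \<sigma>) = alpha0_of m e"
proof -
  have "\<sigma> 0 = 0" using permutes_not_in[OF assms, of 0] by simp
  moreover have "(\<Sum>l=1..m. e (\<sigma> l)) = (\<Sum>l=1..m. e l)"
    using sum.permute[OF assms, of e] by (simp add: o_def)
  ultimately show ?thesis unfolding alpha0_of_def by simp
qed

lemma ufun_reflect_0:
  assumes nz: "nondegenerate s m n e" and i: "i \<in> {1..m}" and j: "j \<in> {m+1..n}"
  shows "ufun s m i j (reflect_coords m e 0) = inverse (ufun s m i j e)"
proof -
  let ?A = "alpha0_of m e"
  let ?e' = "reflect_coords m e 0"
  have e': "?e' k = e k + ?A" if "k \<in> {1..m}" for k
    using that by (simp add: reflect_coords_def gram_def hvec_def)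
  have "(\<Sum>l=1..m. ?e' l) = (\<Sum>l=1..m. e l) + of_nat m * ?A"
    by (simp add: e' sum.distrib)
  then have A': "alpha0_of m ?e' = - ?A"
    by (simp add: alpha0_of_def reflect_coords_def gram_def hvec_def algebra_simps)
  have ar: "alpha0_of m ?e' + (?e' p - ?e' q) = e p - e q" "?e' p - ?e' q = ?A + (e p - e q)"
    if "p \<in> {1..m}" "m < q" for p q
    using that e' A' by (simp_all add: reflect_coords_def hvec_def)
  have mm: "m \<in> {1..m}" "m + 1 \<in> {m+1..n}" and jj: "m < j" "m < m + 1" using i j by auto
  show ?thesis
    unfolding ufun_eq ar(1)[OF i jj(1)] ar(1)[OF i jj(2)] ar(1)[OF mm(1) jj(1)] ar(1)[OF mm(1) jj(2)]
    unfolding ar(2)[OF i jj(1)] ar(2)[OF i jj(2)] ar(2)[OF mm(1) jj(1)] ar(2)[OF mm(1) jj(2)]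
    using nondegenerateD[OF nz i j] nondegenerateD[OF nz i mm(2)] nondegenerateD[OF nz mm(1) j]
      nondegenerateD[OF nz mm]
    by (simp add: field_simps)
qed

lemma ufun_transpose_below:
  assumes k: "1 \<le> k" "k + 2 \<le> m" and j: "m < j"
  shows "ufun s m i j (e \<circ> Transposition.transpose k (Suc k)) =
         ufun s m (Transposition.transpose k (Suc k) i) j e"
proof -
  let ?\<tau> = "Transposition.transpose k (Suc k)"
  have "?\<tau> permutes {1..m}" using k by (intro permutes_swap_id) auto
  moreover have "?\<tau> m = m" "?\<tau> (m+1) = m+1" "?\<tau> j = j" using k j by (auto simp: Transposition.transpose_def)
  ultimately show ?thesis unfolding ufun_eq by (simp add: alpha0_of_permute)
qed

lemma ufun_transpose_m_minus_1:
  assumes nz: "nondegenerate s m n e" and m: "2 \<le> m" and i: "i \<in> {1..m-1}" and j: "j \<in> {m+1..n}"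
  shows "ufun s m i j (e \<circ> Transposition.transpose (m-1) m) =
    (if i = m - 1 then inverse (ufun s m (m-1) j e) else ufun s m i j e / ufun s m (m-1) j e)"
proof -
  let ?\<tau> = "Transposition.transpose (m-1) m"
  have "?\<tau> permutes {1..m}" using m by (intro permutes_swap_id) auto
  then have A: "alpha0_of m (e \<circ> ?\<tau>) = alpha0_of m e" by (rule alpha0_of_permute)
  have \<tau>: "?\<tau> m = m - 1" "?\<tau> (m+1) = m+1" "?\<tau> j = j" "?\<tau> i = (if i = m - 1 then m else i)"
    using i j m by (auto simp: Transposition.transpose_def)
  have mm: "m \<in> {1..m}" "m + 1 \<in> {m+1..n}" "m - 1 \<in> {1..m}" "i \<in> {1..m}" using i j m by auto
  show ?thesis
    unfolding ufun_eq A using \<tau>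
      nondegenerateD[OF nz mm(1) mm(2)] nondegenerateD[OF nz mm(3) mm(2)] nondegenerateD[OF nz mm(1) j]
      nondegenerateD[OF nz mm(3) j] nondegenerateD[OF nz mm(4) mm(2)] nondegenerateD[OF nz mm(4) j]
    by (simp add: field_simps)
qed

text \<open>The Riemann relation at x = (A+p+q)/2 - r, y = (A+p+q)/2 - t, u = (A-p+q)/2, v = (A+p-q)/2.\<close>

lemma riemann_three_term:
  assumes R: "riemann_relation s" and odd: "\<forall>z. s (- z) = - s z"
  shows "s (A+q-r) * s (p-r) * s (A+p-t) * s (q-t) - s A * s (p-q) * s (A+q-r+p-t) * s (r-t)
       = s (q-r) * s (A+p-r) * s (p-t) * s (A+q-t)"
proof -
  define x where "x = (A+p+q)/2 - r"
  define y where "y = (A+p+q)/2 - t"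
  define u where "u = (A-p+q)/2"
  define v where "v = (A+p-q)/2"
  have rel: "s (x+y) * s (x-y) * s (u+v) * s (u-v) =
     s (x+u) * s (x-u) * s (y+v) * s (y-v) - s (x+v) * s (x-v) * s (y+u) * s (y-u)"
    using R unfolding riemann_relation_def by blast
  have "x + y = A+q-r+p-t" "x - y = - (r - t)" "u + v = A" "u - v = - (p - q)"
       "x + u = A+q-r" "x - u = p - r" "y + v = A+p-t" "y - v = q - t"
       "x + v = A+p-r" "x - v = q - r" "y + u = A+q-t" "y - u = p - t"
    unfolding x_def y_def u_def v_def by (simp_all add: field_simps)
  note rel' = rel[unfolded this odd[rule_format]]
  have "a * (-b) * c * (-d) = e*f*g*h - i*j*k*l \<Longrightarrow> e*f*g*h - c*d*a*b = j*i*l*k"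
    for a b c d e f g h i j k l :: complex
    by (simp add: algebra_simps)
  from this[OF rel'] show ?thesis .
qed

lemma alpha0_of_transpose_m:
  assumes "1 \<le> m"
  shows "alpha0_of m (e \<circ> Transposition.transpose m (Suc m)) = alpha0_of m e + (e m - e (m+1))"
proof -
  let ?\<tau> = "Transposition.transpose m (Suc m)"
  have split: "(\<Sum>l=1..m. f l) = f m + (\<Sum>l\<in>{1..m}-{m}. f l)" for f :: "nat \<Rightarrow> complex"
    using assms by (simp add: sum.remove)
  have "(\<Sum>l\<in>{1..m}-{m}. e (?\<tau> l)) = (\<Sum>l\<in>{1..m}-{m}. e l)"
    by (rule sum.cong) (auto simp: Transposition.transpose_def)
  moreover have "?\<tau> 0 = 0" "?\<tau> m = m + 1" using assms by (auto simp: Transposition.transpose_def)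
  ultimately show ?thesis
    unfolding alpha0_of_def comp_def split[of "\<lambda>l. e (?\<tau> l)"] split[of e] by simp
qed

lemma ufun_transpose_m:
  assumes R: "riemann_relation s" and odd: "\<forall>z. s (- z) = - s z"
    and nz: "nondegenerate s m n e" and i: "i \<in> {1..m-1}" and j: "j \<in> {m+2..n}"
  shows "ufun s m i j (e \<circ> Transposition.transpose m (Suc m)) = 1 - ufun s m i j e"
proof -
  let ?\<tau> = "Transposition.transpose m (Suc m)"
  define A where "A = alpha0_of m e"
  define p where "p = e i"
  define q where "q = e m"
  define r where "r = e (m+1)"
  define t where "t = e j"
  have mm: "m \<in> {1..m}" "m + 1 \<in> {m+1..n}" "i \<in> {1..m}" "j \<in> {m+1..n}" using i j by auto
  have A': "alpha0_of m (e \<circ> ?\<tau>) = A + (q - r)"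
    using alpha0_of_transpose_m[of m e] mm(1) by (simp add: A_def q_def r_def)
  have \<tau>: "?\<tau> i = i" "?\<tau> j = j" "?\<tau> m = m + 1" "?\<tau> (m+1) = m"
    using i j by (auto simp: Transposition.transpose_def)
  have nz': "s (q - r) \<noteq> 0" "s (A + q - r) \<noteq> 0" "s (p - r) \<noteq> 0" "s (A + p - r) \<noteq> 0"
       "s (p - t) \<noteq> 0" "s (A + p - t) \<noteq> 0" "s (q - t) \<noteq> 0" "s (A + q - t) \<noteq> 0"
    using nondegenerateD[OF nz mm(1) mm(2)] nondegenerateD[OF nz mm(3) mm(2)]
      nondegenerateD[OF nz mm(1) mm(4)] nondegenerateD[OF nz mm(3) mm(4)]
    by (simp_all add: A_def p_def q_def r_def t_def add_diff_eq)
  have "s (r - q) = - s (q - r)" using odd[rule_format, of "q - r"] by simp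
  then have lhs: "ufun s m i j (e \<circ> ?\<tau>) =
      (s A * s (p - q)) / (- s (q - r) * s (A + p - r)) *
      ((s (A + q - r + p - t) * s (r - t)) / (s (p - t) * s (A + q - t)))"
    unfolding ufun_eq A' by (simp add: \<tau> p_def q_def r_def t_def algebra_simps)
  have rhs: "ufun s m i j e =
      (s (A + q - r) * s (p - r)) / (s (q - r) * s (A + p - r)) *
      ((s (A + p - t) * s (q - t)) / (s (p - t) * s (A + q - t)))"
    unfolding ufun_eq by (simp add: A_def p_def q_def r_def t_def add_diff_eq)
  have "C * D / (- J * I) * (X * Y / (L * K)) = 1 - E * F / (J * I) * (G * H / (L * K))"
    if "E * F * G * H - C * D * X * Y = J * I * L * K" "J \<noteq> 0" "I \<noteq> 0" "L \<noteq> 0" "K \<noteq> 0"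
    for C D X Y E F G H I J K L :: complex
    using that by (simp add: field_simps)
  from this[OF riemann_three_term[OF R odd]] show ?thesis
    unfolding lhs rhs using nz' by blast
qed

lemma ufun_transpose_m_plus_1:
  assumes nz: "nondegenerate s m n e" and i: "i \<in> {1..m}" and j: "j \<in> {m+2..n}"
  shows "ufun s m i j (e \<circ> Transposition.transpose (m+1) (m+2)) =
    (if j = m + 2 then inverse (ufun s m i (m+2) e) else ufun s m i j e / ufun s m i (m+2) e)"
proof -
  let ?\<tau> = "Transposition.transpose (m+1) (m+2)"
  have A: "alpha0_of m (e \<circ> ?\<tau>) = alpha0_of m e"
    unfolding alpha0_of_def by (simp add: Transposition.transpose_def)
  have \<tau>: "?\<tau> i = i" "?\<tau> m = m" "?\<tau> (m+1) = m+2" "?\<tau> j = (if j = m + 2 then m + 1 else j)"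
    using i j by (auto simp: Transposition.transpose_def)
  have mm: "m \<in> {1..m}" "m + 1 \<in> {m+1..n}" "m + 2 \<in> {m+1..n}" "j \<in> {m+1..n}" using i j by auto
  show ?thesis
    unfolding ufun_eq A using \<tau> i
      nondegenerateD[OF nz i mm(2)] nondegenerateD[OF nz i mm(3)] nondegenerateD[OF nz mm(1) mm(2)]
      nondegenerateD[OF nz mm(1) mm(3)] nondegenerateD[OF nz i mm(4)] nondegenerateD[OF nz mm(1) mm(4)]
    by (simp add: field_simps)
qed

lemma ufun_transpose_above:
  assumes "m + 2 \<le> k" "i \<le> m"
  shows "ufun s m i j (e \<circ> Transposition.transpose k (Suc k)) =
         ufun s m i (Transposition.transpose k (Suc k) j) e"
proof -
  let ?\<tau> = "Transposition.transpose k (Suc k)"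
  have \<tau>: "?\<tau> l = l" if "l \<le> m + 1" for l using that assms by (auto simp: Transposition.transpose_def)
  then have "alpha0_of m (e \<circ> ?\<tau>) = alpha0_of m e" unfolding alpha0_of_def by simp
  then show ?thesis unfolding ufun_eq using \<tau>[of i] \<tau>[of m] \<tau>[of "m+1"] assms by simp
qed

lemma ufun_reflect_coords:
  assumes R: "riemann_relation s" and odd: "\<forall>z. s (- z) = - s z"
    and m: "2 \<le> m" and n: "m + 2 \<le> n" and nz: "nondegenerate s m n e"
    and i: "i \<in> {1..m-1}" and j: "j \<in> {m+2..n}"
  shows "ufun s m i j (reflect_coords m e k) = Sgen m k (\<lambda>i j. ufun s m i j e) i j"
proof -
  have i': "i \<in> {1..m}" "i \<le> m" and j': "j \<in> {m+1..n}" "m < j" using i j by auto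
  have m_neq: "m \<noteq> 0" "m - 1 \<noteq> 0" "m \<noteq> m - Suc 0" "Suc m \<noteq> m - Suc 0" "\<not> m + 2 \<le> m" "\<not> m + 1 \<le> m"
    using m by auto
  consider "k = 0" | "1 \<le> k" "k + 2 \<le> m" | "k = m - 1" "k \<noteq> 0" | "k = m" | "k = m + 1" | "m + 2 \<le> k"
    using m by linarith
  then show ?thesis
  proof cases
    case 1
    then show ?thesis using ufun_reflect_0[OF nz i'(1) j'(1)] by (simp add: Sgen_def)
  next
    case 2
    then show ?thesis using ufun_transpose_below[OF 2 j'(2)] by (simp add: reflect_coords_def Sgen_def)
  next
    case 3
    then have "Suc k = m" using m by simp
    with 3 show ?thesis using ufun_transpose_m_minus_1[OF nz m i j'(1)] m_neq
      by (simp add: reflect_coords_def Sgen_def)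
  next
    case 4
    then show ?thesis using ufun_transpose_m[OF R odd nz i j] m_neq
      by (simp add: reflect_coords_def Sgen_def)
  next
    case 5
    then show ?thesis using ufun_transpose_m_plus_1[OF nz i'(1) j] m_neq
      by (simp add: reflect_coords_def Sgen_def)
  next
    case 6
    then have "k \<noteq> m - 1" "k \<noteq> m + 1" by auto
    with 6 show ?thesis using ufun_transpose_above[OF 6 i'(2)] by (simp add: reflect_coords_def Sgen_def)
  qed
qed

lemma pairing_add: "pairing n (\<lambda>j. f j + g j) x = pairing n f x + pairing n g x"
  by (simp add: pairing_def sum.distrib algebra_simps)

lemma pairing_diff: "pairing n (\<lambda>j. f j - g j) x = pairing n f x - pairing n g x"
  by (simp add: pairing_def sum_subtractf algebra_simps)

lemma pairing_scale: "pairing n (\<lambda>j. c * f j) x = c * pairing n f x"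
  by (simp add: pairing_def sum_distrib_left algebra_simps)

lemma pairing_sum: "pairing n (\<lambda>j. \<Sum>l\<in>S. f l j) x = (\<Sum>l\<in>S. pairing n (f l) x)"
  by (simp add: pairing_def sum_distrib_right sum.swap[of _ S])

lemma pairing_epsf: "pairing n (epsf m k) x = (if k \<le> n then gram m k * x k else 0)"
  by (simp add: pairing_def epsf_def if_distrib[of "\<lambda>y. y * _"] sum.delta' cong: if_cong)

lemma pairing_cong: "(\<And>j. j \<le> n \<Longrightarrow> f j = g j) \<Longrightarrow> pairing n f x = pairing n g x"
  by (simp add: pairing_def)

lemma wact_Nil [simp]: "wact m n [] f = f"
  by (simp add: wact_def)

lemma wact_Cons: "wact m n (a # ws) f = srefl m n a (wact m n ws f)"
  by (simp add: wact_def)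

lemma wact_snoc: "wact m n (ws @ [a]) f = wact m n ws (srefl m n a f)"
  by (simp add: wact_def)

lemma srefl_add: "srefl m n a (\<lambda>j. f j + g j) = (\<lambda>j. srefl m n a f j + srefl m n a g j)"
  by (simp add: srefl_def pairing_add fun_eq_iff algebra_simps)

lemma srefl_scale: "srefl m n a (\<lambda>j. c * f j) = (\<lambda>j. c * srefl m n a f j)"
  by (simp add: srefl_def pairing_scale fun_eq_iff algebra_simps)

lemma wact_add: "wact m n ws (\<lambda>j. f j + g j) = (\<lambda>j. wact m n ws f j + wact m n ws g j)"
  by (induction ws) (simp_all add: wact_Cons srefl_add)

lemma wact_scale: "wact m n ws (\<lambda>j. c * f j) = (\<lambda>j. c * wact m n ws f j)"
  by (induction ws) (simp_all add: wact_Cons srefl_scale)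

lemma wact_zero: "wact m n ws (\<lambda>j. 0) = (\<lambda>j. 0)"
  using wact_scale[of m n ws 0 "\<lambda>j. 0"] by simp

lemma wact_diff: "wact m n ws (\<lambda>j. f j - g j) = (\<lambda>j. wact m n ws f j - wact m n ws g j)"
  using wact_add[of m n ws f "\<lambda>j. (-1) * g j"] wact_scale[of m n ws "-1" g] by simp

lemma wact_sum:
  assumes "finite S"
  shows "wact m n ws (\<lambda>j. \<Sum>l\<in>S. f l j) = (\<lambda>j. \<Sum>l\<in>S. wact m n ws (f l) j)"
  using assms by (induction S rule: finite_induct) (simp_all add: wact_zero wact_add)

lemma wact_cong:
  assumes "\<And>j. j \<le> n \<Longrightarrow> f j = g j" "j \<le> n"
  shows "wact m n ws f j = wact m n ws g j"
  using assms(2)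
proof (induction ws arbitrary: j)
  case Nil
  then show ?case using assms(1) by simp
next
  case (Cons a ws)
  then show ?case
    using pairing_cong[of n "wact m n ws f" "wact m n ws g"] by (simp add: wact_Cons srefl_def)
qed

lemma pairing_alpha_hvec:
  assumes "a < n" "m < n"
  shows "pairing n (alpha m a) (hvec m a) = 2"
proof (cases "a = 0")
  case True
  have "pairing n (alpha m a) (hvec m a) =
      (\<Sum>j\<le>n. (if j = 0 then gram m 0 else 0) + (if j \<in> {1..m} then 1 else 0))"
    unfolding pairing_def by (rule sum.cong) (auto simp: True alpha_def hvec_def gram_def)
  also have "\<dots> = gram m 0 + (\<Sum>j\<le>n. (if j \<in> {1..m} then 1 else 0))"
    by (simp add: sum.distrib sum.delta)
  also have "(\<Sum>j\<le>n. (if j \<in> {1..m} then (1::complex) else 0)) = (\<Sum>j\<in>{..n} \<inter> {1..m}. 1)"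
    by (rule sum.inter_restrict[symmetric]) simp
  also have "{..n} \<inter> {1..m} = {1..m}" using assms by auto
  finally show ?thesis by (simp add: gram_def)
next
  case False
  have "pairing n (alpha m a) (hvec m a) = (\<Sum>j\<le>n. (if j = a then 1 else 0) + (if j = Suc a then 1 else 0))"
    unfolding pairing_def by (rule sum.cong) (use False in \<open>auto simp: alpha_def hvec_def gram_def\<close>)
  also have "\<dots> = 2" using assms by (simp add: sum.distrib)
  finally show ?thesis .
qed

lemma srefl_srefl:
  assumes "a < n" "m < n"
  shows "srefl m n a (srefl m n a f) = f"
proof -
  define c where "c = pairing n f (hvec m a)"
  have "pairing n (\<lambda>j. f j - c * alpha m a j) (hvec m a) = - c"
    using pairing_alpha_hvec[OF assms] by (simp add: pairing_diff pairing_scale c_def)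
  then show ?thesis by (simp add: srefl_def fun_eq_iff c_def[symmetric])
qed

lemma wact_rev:
  assumes "set ws \<subseteq> {..<n}" "m < n"
  shows "wact m n (rev ws) (wact m n ws f) = f"
  using assms(1)
  by (induction ws) (simp_all add: wact_snoc wact_Cons srefl_srefl assms(2))

lemma wact_nonzero:
  assumes "set ws \<subseteq> {..<n}" "m < n" "j0 \<le> n" "f j0 \<noteq> 0"
  shows "\<exists>j\<le>n. wact m n ws f j \<noteq> 0"
proof (rule ccontr)
  assume "\<not> ?thesis"
  then have "wact m n (rev ws) (wact m n ws f) j0 = wact m n (rev ws) (\<lambda>j. 0) j0"
    using assms(3) by (intro wact_cong) auto
  then show False using wact_rev[OF assms(1,2)] wact_zero assms(4) by metis
qed

definition weps :: "nat \<Rightarrow> nat \<Rightarrow> nat list \<Rightarrow> (nat \<Rightarrow> complex) \<Rightarrow> nat \<Rightarrow> complex" where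
  "weps m n ws x = (\<lambda>k. pairing n (wact m n ws (epsf m k)) x)"

lemma alpha_0_eq: "alpha m 0 = (\<lambda>j. epsf m 0 j - (\<Sum>l=1..m. epsf m l j))"
proof
  fix j
  have "(\<Sum>l=1..m. epsf m l j) = (if j \<in> {1..m} then 1 else 0)"
    by (simp add: epsf_def gram_def sum.delta cong: if_cong)
  then show "alpha m 0 j = epsf m 0 j - (\<Sum>l=1..m. epsf m l j)"
    by (auto simp: alpha_def hvec_def epsf_def gram_def)
qed

lemma pairing_wact_alpha_0: "pairing n (wact m n ws (alpha m 0)) x = alpha0_of m (weps m n ws x)"
  unfolding alpha_0_eq wact_diff wact_sum[OF finite_atLeastAtMost] pairing_diff pairing_sum
  by (simp add: alpha0_of_def weps_def)

lemma weps_snoc: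
  assumes "a < n" "m < n"
  shows "weps m n (ws @ [a]) x = reflect_coords m (weps m n ws x) a"
proof (cases "a = 0")
  case True
  have "srefl m n 0 (epsf m k) = (\<lambda>j. epsf m k j - gram m k * hvec m 0 k * alpha m 0 j)" for k
    using assms by (auto simp: srefl_def pairing_epsf hvec_def)
  then show ?thesis
    unfolding weps_def wact_snoc True
    by (simp add: wact_diff wact_scale pairing_diff pairing_scale pairing_wact_alpha_0
        reflect_coords_def weps_def)
next
  case False
  have "srefl m n a (epsf m k) = epsf m (Transposition.transpose a (Suc a) k)" for k
  proof -
    have "pairing n (epsf m k) (hvec m a) = gram m k * hvec m a k"
      using False assms by (auto simp: pairing_epsf hvec_def)
    then show ?thesis using False assms
      by (auto simp: srefl_def fun_eq_iff epsf_def alpha_def hvec_def gram_def Transposition.transpose_def)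
  qed
  then show ?thesis using False by (simp add: weps_def wact_snoc reflect_coords_def comp_def)
qed

lemma weps_eq_foldl:
  assumes "set ws \<subseteq> {..<n}" "m < n"
  shows "weps m n ws x = foldl (reflect_coords m) (weps m n [] x) ws"
  using assms(1) by (induction ws rule: rev_induct) (simp_all add: weps_snoc assms(2))

section \<open>Genericity\<close>

definition open_dense_in :: "'a::topological_space set \<Rightarrow> 'a set \<Rightarrow> bool" where
  "open_dense_in H U \<longleftrightarrow> openin (top_of_set H) U \<and> H \<subseteq> closure U"

lemma open_dense_in_Int:
  assumes U: "open_dense_in H U" and V: "open_dense_in H V"
  shows "open_dense_in H (U \<inter> V)"
proof -
  obtain W where W: "open W" "U = H \<inter> W"
    using U unfolding open_dense_in_def openin_open by blast
  have "V \<subseteq> H" "H \<subseteq> closure V"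
    using V unfolding open_dense_in_def by (auto dest: openin_imp_subset)
  then have "U \<subseteq> W \<inter> closure V" using W by auto
  also have "\<dots> \<subseteq> closure (W \<inter> V)" by (rule open_Int_closure_subset[OF W(1)])
  also have "W \<inter> V = U \<inter> V" using W \<open>V \<subseteq> H\<close> by auto
  finally have "closure U \<subseteq> closure (U \<inter> V)" by (simp add: closure_minimal)
  then show ?thesis
    using U V unfolding open_dense_in_def by (blast intro: openin_Int)
qed

lemma open_dense_in_finite_Inter:
  assumes "finite F" "\<And>f. f \<in> F \<Longrightarrow> open_dense_in H {x \<in> H. P f x}"
  shows "open_dense_in H {x \<in> H. \<forall>f\<in>F. P f x}"
  using assms
proof (induction F rule: finite_induct)
  case empty
  then show ?case by (simp add: open_dense_in_def closure_subset)
next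
  case (insert f F)
  have "{x \<in> H. \<forall>g\<in>insert f F. P g x} = {x \<in> H. P f x} \<inter> {x \<in> H. \<forall>g\<in>F. P g x}"
    by auto
  moreover have "open_dense_in H {x \<in> H. P f x}" "open_dense_in H {x \<in> H. \<forall>g\<in>F. P g x}"
    using insert.IH insert.prems by simp_all
  ultimately show ?case by (simp add: open_dense_in_Int)
qed

lemma closure_nonzero_entire:
  assumes hol: "f holomorphic_on UNIV" and nz: "\<exists>z. f z \<noteq> 0"
  shows "closure {z. f z \<noteq> 0} = UNIV"
proof -
  let ?A = "{z. f z \<noteq> 0}"
  have "w \<in> closure ?A" for w
  proof (rule ccontr)
    assume "w \<notin> closure ?A"
    then obtain e where e: "e > 0" "ball w e \<subseteq> - closure ?A"
      using open_contains_ball_eq[of "- closure ?A" w] by auto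
    have "f z = 0" if "z \<in> ball w e" for z
      using that e(2) closure_subset[of ?A] by auto
    then have "f z = 0" for z
      using analytic_continuation_open[of "ball w e" UNIV f "\<lambda>_. 0" z] hol e(1) by (simp add: connected_UNIV)
    with nz show False by simp
  qed
  then show ?thesis by auto
qed

lemma hspace_subset_closure_nonvanishing:
  assumes hol: "s holomorphic_on UNIV" and nz: "\<exists>z. s z \<noteq> 0"
    and j0: "j0 \<le> n" "lam j0 \<noteq> 0" and x0: "x0 \<in> hspace n"
  shows "x0 \<in> closure {x \<in> hspace n. s (pairing n lam x) \<noteq> 0}"
proof -
  let ?U = "{x \<in> hspace n. s (pairing n lam x) \<noteq> 0}"
  define c where "c = pairing n lam x0"
  define T where "T = {t. s (c + lam j0 * t) \<noteq> 0}"
  define g where "g = (\<lambda>t::complex. \<lambda>j. x0 j + (if j = j0 then t else 0))"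
    \<comment> \<open>along the line g through x0 the condition becomes t \<in> T, and T is dense in the plane\<close>
  have cont_g: "continuous_on UNIV g"
    unfolding g_def
    by (rule continuous_on_coordinatewise_then_product, rename_tac j, case_tac "j = j0")
       (auto intro!: continuous_intros)
  have "pairing n lam (g t) = c + lam j0 * t" for t
  proof -
    have "pairing n lam (g t) = (\<Sum>j\<le>n. lam j * x0 j + (if j = j0 then lam j0 * t else 0))"
      unfolding pairing_def g_def by (rule sum.cong) (auto simp: algebra_simps)
    then show ?thesis using j0(1) by (simp add: sum.distrib c_def pairing_def)
  qed
  moreover have "g t \<in> hspace n" for t using x0 j0(1) by (simp add: hspace_def g_def)
  ultimately have gT: "g ` T \<subseteq> ?U" by (auto simp: T_def)
  have "(s \<circ> (\<lambda>t. c + lam j0 * t)) holomorphic_on UNIV"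
    by (intro holomorphic_on_compose holomorphic_intros holomorphic_on_subset[OF hol]) simp
  moreover obtain z where "s z \<noteq> 0" using nz by blast
  then have "\<exists>t. s (c + lam j0 * t) \<noteq> 0"
    using j0(2) by (intro exI[of _ "(z - c) / lam j0"]) simp
  ultimately have "closure T = UNIV"
    unfolding T_def by (intro closure_nonzero_entire) (simp_all add: o_def)
  moreover have "g 0 = x0" by (simp add: g_def)
  ultimately have "x0 \<in> g ` closure T" by (metis UNIV_I image_eqI)
  also have "\<dots> \<subseteq> closure (g ` T)" by (rule continuous_image_closure_subset[OF cont_g]) simp
  also have "\<dots> \<subseteq> closure ?U" by (rule closure_mono[OF gT])
  finally show ?thesis .
qed

lemma open_dense_in_nonvanishing:
  assumes hol: "s holomorphic_on UNIV" and nz: "\<exists>z. s z \<noteq> 0" and lam: "\<exists>j0\<le>n. lam j0 \<noteq> 0"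
  shows "open_dense_in (hspace n) {x \<in> hspace n. s (pairing n lam x) \<noteq> 0}"
proof -
  have "continuous_on UNIV (\<lambda>x::nat \<Rightarrow> complex. pairing n lam x)"
    unfolding pairing_def
    by (intro continuous_on_sum continuous_on_mult continuous_on_const continuous_on_product_coordinates)
  then have "continuous_on (hspace n) (\<lambda>x. s (pairing n lam x))"
    by (intro continuous_on_compose2[OF holomorphic_on_imp_continuous_on[OF hol]])
       (auto intro: continuous_on_subset)
  from continuous_openin_preimage_gen[OF this open_Compl[OF closed_singleton[of 0]]]
  have "openin (top_of_set (hspace n)) {x \<in> hspace n. s (pairing n lam x) \<noteq> 0}"
    by (simp add: vimage_def Int_def)
  moreover obtain j0 where "j0 \<le> n" "lam j0 \<noteq> 0" using lam by blast
  ultimately show ?thesis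
    unfolding open_dense_in_def using hspace_subset_closure_nonvanishing[OF hol nz] by blast
qed

text \<open>The arguments of s in the u_{i,j} at all the intermediate points w'(epsilon), w' a proper
  prefix of the word ws.\<close>

definition critical_functionals :: "nat \<Rightarrow> nat \<Rightarrow> nat list \<Rightarrow> (nat \<Rightarrow> complex) set" where
  "critical_functionals m n ws = (\<Union>k<length ws. \<Union>p\<in>{1..m}. \<Union>q\<in>{m+1..n}.
     {wact m n (take k ws) (\<lambda>j. epsf m p j - epsf m q j),
      wact m n (take k ws) (\<lambda>j. alpha m 0 j + (epsf m p j - epsf m q j))})"

lemma nondegenerate_weps:
  assumes crit: "\<forall>lam\<in>critical_functionals m n ws. s (pairing n lam x) \<noteq> 0" and k: "k < length ws"
  shows "nondegenerate s m n (weps m n (take k ws) x)"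
  unfolding nondegenerate_def
proof (intro ballI)
  fix p q assume pq: "p \<in> {1..m}" "q \<in> {m+1..n}"
  let ?w = "wact m n (take k ws)" and ?e = "weps m n (take k ws) x"
  have "?w (\<lambda>j. epsf m p j - epsf m q j) \<in> critical_functionals m n ws"
    "?w (\<lambda>j. alpha m 0 j + (epsf m p j - epsf m q j)) \<in> critical_functionals m n ws"
    unfolding critical_functionals_def using k pq by (intro UN_I[of k] UN_I[of p] UN_I[of q]; simp)+
  then have "s (pairing n (?w (\<lambda>j. epsf m p j - epsf m q j)) x) \<noteq> 0"
    "s (pairing n (?w (\<lambda>j. alpha m 0 j + (epsf m p j - epsf m q j))) x) \<noteq> 0"
    using crit by blast+
  moreover have "pairing n (?w (\<lambda>j. epsf m p j - epsf m q j)) x = ?e p - ?e q"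
    "pairing n (?w (\<lambda>j. alpha m 0 j + (epsf m p j - epsf m q j))) x = alpha0_of m ?e + (?e p - ?e q)"
    by (simp_all only: wact_add wact_diff pairing_add pairing_diff pairing_wact_alpha_0 weps_def)
  ultimately show "s (?e p - ?e q) \<noteq> 0 \<and> s (alpha0_of m ?e + (?e p - ?e q)) \<noteq> 0"
    by simp
qed

lemma critical_functionals_nonzero:
  assumes ws: "set ws \<subseteq> {..<n}" and m: "3 \<le> m" "m < n" and lam: "lam \<in> critical_functionals m n ws"
  shows "\<exists>j\<le>n. lam j \<noteq> 0"
proof -
  from lam obtain k p q where k: "k < length ws" and p: "p \<in> {1..m}" and q: "q \<in> {m+1..n}"
    and lam_cases: "lam = wact m n (take k ws) (\<lambda>j. epsf m p j - epsf m q j) \<or>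
         lam = wact m n (take k ws) (\<lambda>j. alpha m 0 j + (epsf m p j - epsf m q j))"
    unfolding critical_functionals_def by (elim UN_E insertE) auto
  have take: "set (take k ws) \<subseteq> {..<n}" using ws set_take_subset by (rule order_trans[rotated])
  have "\<exists>j\<le>n. wact m n (take k ws) (\<lambda>j. epsf m p j - epsf m q j) j \<noteq> 0"
    by (rule wact_nonzero[OF take m(2), of p]) (use p q m in \<open>auto simp: epsf_def gram_def\<close>)
  moreover have "\<exists>j\<le>n. wact m n (take k ws) (\<lambda>j. alpha m 0 j + (epsf m p j - epsf m q j)) j \<noteq> 0"
  proof (rule wact_nonzero[OF take m(2) le0])
    have "(of_nat m :: complex) \<noteq> 2" using m of_nat_eq_iff[of m 2] by auto
    then show "alpha m 0 0 + (epsf m p 0 - epsf m q 0) \<noteq> 0"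
      using p q by (simp add: alpha_def hvec_def gram_def epsf_def)
  qed
  ultimately show ?thesis using lam_cases by auto
qed

lemma open_dense_in_noncritical:
  assumes hol: "s holomorphic_on UNIV" and nz: "\<exists>z. s z \<noteq> 0"
    and ws: "set ws \<subseteq> {..<n}" and m: "3 \<le> m" "m < n"
  shows "open_dense_in (hspace n)
    {x \<in> hspace n. \<forall>lam\<in>critical_functionals m n ws. s (pairing n lam x) \<noteq> 0}"
proof (rule open_dense_in_finite_Inter)
  show "finite (critical_functionals m n ws)" by (simp add: critical_functionals_def)
  fix lam assume "lam \<in> critical_functionals m n ws"
  then show "open_dense_in (hspace n) {x \<in> hspace n. s (pairing n lam x) \<noteq> 0}"
    by (intro open_dense_in_nonvanishing[OF hol nz] critical_functionals_nonzero[OF ws m])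
qed

lemma ucoord_config_act:
  assumes R: "riemann_relation s" and odd: "\<forall>z. s (- z) = - s z"
    and m: "2 \<le> m" and n: "m + 2 \<le> n"
    and start: "\<forall>i\<in>{1..m-1}. \<forall>j\<in>{m+2..n}. ucoord m P i j = ufun s m i j e"
  shows "set ws \<subseteq> {..<n} \<Longrightarrow>
    \<forall>k<length ws. nondegenerate s m n (foldl (reflect_coords m) e (take k ws)) \<Longrightarrow>
    \<forall>i\<in>{1..m-1}. \<forall>j\<in>{m+2..n}.
      ucoord m (config_act m n P ws) i j = ufun s m i j (foldl (reflect_coords m) e ws)"
proof (induction ws rule: rev_induct)
  case Nil
  then show ?case using start by (simp add: config_act_def)
next
  case (snoc a ws)
  define Q where "Q = config_act m n P ws"
  define e' where "e' = foldl (reflect_coords m) e ws"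
  have a: "a < n" using snoc.prems(1) by simp
  have IH: "ucoord m Q i j = ufun s m i j e'" if "i \<in> {1..m-1}" "j \<in> {m+2..n}" for i j
    using snoc.IH snoc.prems that by (simp add: Q_def e'_def nth_append)
  have nz: "nondegenerate s m n e'"
    using snoc.prems(2)[rule_format, of "length ws"] by (simp add: e'_def)
  have Q_nz: "\<forall>i\<in>{1..m-1}. \<forall>j\<in>{m+2..n}. ucoord m Q i j \<noteq> 0"
  proof (intro ballI)
    fix i j assume "i \<in> {1..m-1}" "j \<in> {m+2..n}"
    moreover have "i \<in> {1..m}" "j \<in> {m+1..n}" using calculation by auto
    ultimately show "ucoord m Q i j \<noteq> 0" using ufun_nonzero[OF nz] IH by simp
  qed
  show ?case
  proof (intro ballI)
    fix i j assume i: "i \<in> {1..m-1}" and j: "j \<in> {m+2..n}"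
    have "ucoord m (config_act m n P (ws @ [a])) i j = Sgen m a (ucoord m Q) i j"
      using ucoord_ract[OF m n a Q_nz i j] by (simp add: config_act_def Q_def)
    also have "\<dots> = Sgen m a (\<lambda>i j. ufun s m i j e') i j"
      by (rule Sgen_cong[OF IH a i j])
    also have "\<dots> = ufun s m i j (foldl (reflect_coords m) e (ws @ [a]))"
      using ufun_reflect_coords[OF R odd m n nz i j] by (simp add: e'_def)
    finally show "ucoord m (config_act m n P (ws @ [a])) i j =
        ufun s m i j (foldl (reflect_coords m) e (ws @ [a]))" .
  qed
qed

lemma ufun_weps_eq_Sw:
  assumes R: "riemann_relation s" and odd: "\<forall>z. s (- z) = - s z"
    and m: "2 \<le> m" and n: "m + 2 \<le> n" and ws: "set ws \<subseteq> {..<n}"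
    and i: "i \<in> {1..m-1}" and j: "j \<in> {m+2..n}"
    and nondeg: "\<forall>k<length ws. nondegenerate s m n (weps m n (take k ws) x)"
  shows "ufun s m i j (weps m n ws x) = Sw m n ws i j (\<lambda>a b. ufun s m a b (weps m n [] x))"
proof -
  let ?e = "weps m n [] x"
  have mn: "m < n" using n by simp
  have "weps m n (take k ws) x = foldl (reflect_coords m) ?e (take k ws)" for k
    using ws set_take_subset by (intro weps_eq_foldl[OF _ mn]) (rule order_trans[rotated])
  then have nondeg': "\<forall>k<length ws. nondegenerate s m n (foldl (reflect_coords m) ?e (take k ws))"
    using nondeg by simp
  have start: "\<forall>i\<in>{1..m-1}. \<forall>j\<in>{m+2..n}.
      ucoord m (normal_config m (\<lambda>a b. ufun s m a b ?e)) i j = ufun s m i j ?e"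
    using ucoord_normal_config by auto
  have "ucoord m (config_act m n (normal_config m (\<lambda>a b. ufun s m a b ?e)) ws) i j =
      ufun s m i j (foldl (reflect_coords m) ?e ws)"
    using ucoord_config_act[OF R odd m n start ws nondeg'] i j by blast
  then show ?thesis unfolding Sw_def weps_eq_foldl[OF ws mn] by simp
qed

theorem theorem2:
  fixes s :: "complex \<Rightarrow> complex" and m n :: nat
  assumes "3 \<le> m" and "m < n"
    and "s holomorphic_on UNIV"
    and "\<exists>z. s z \<noteq> 0"
    and "\<forall>z. s (- z) = - s z"
    and "riemann_relation s"
  shows "\<forall>ws i j. set ws \<subseteq> {..<n} \<and> 1 \<le> i \<and> i \<le> m - 1 \<and> m + 2 \<le> j \<and> j \<le> n \<longrightarrow>
    (\<exists>U. openin (top_of_set (hspace n)) U \<and> hspace n \<subseteq> closure U \<and>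
      (\<forall>x\<in>U.
         ufun s m i j (\<lambda>k. pairing n (wact m n ws (epsf m k)) x) =
         Sw m n ws i j (\<lambda>a b. ufun s m a b (\<lambda>k. pairing n (epsf m k) x))))"
proof (intro allI impI)
  fix ws i j
  assume "set ws \<subseteq> {..<n} \<and> 1 \<le> i \<and> i \<le> m - 1 \<and> m + 2 \<le> j \<and> j \<le> n"
  then have ws: "set ws \<subseteq> {..<n}" and i: "i \<in> {1..m-1}" and j: "j \<in> {m+2..n}"
    and m: "2 \<le> m" "m + 2 \<le> n"
    using assms(1) by auto
  define U where "U = {x \<in> hspace n. \<forall>lam\<in>critical_functionals m n ws. s (pairing n lam x) \<noteq> 0}"
  have "open_dense_in (hspace n) U"
    unfolding U_def by (rule open_dense_in_noncritical[OF assms(3,4) ws assms(1,2)])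
  moreover have "ufun s m i j (weps m n ws x) = Sw m n ws i j (\<lambda>a b. ufun s m a b (weps m n [] x))"
    if "x \<in> U" for x
    using that nondegenerate_weps[of m n ws s x] U_def
    by (intro ufun_weps_eq_Sw[OF assms(6,5) m ws i j]) simp
  ultimately show "\<exists>U. openin (top_of_set (hspace n)) U \<and> hspace n \<subseteq> closure U \<and>
      (\<forall>x\<in>U. ufun s m i j (\<lambda>k. pairing n (wact m n ws (epsf m k)) x) =
         Sw m n ws i j (\<lambda>a b. ufun s m a b (\<lambda>k. pairing n (epsf m k) x)))"
    unfolding open_dense_in_def weps_def by auto
qed

end
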